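(* Fix a slot $n$ and state $(\mathbf x(n),\mathbf g(n))$ of the model in the context. Let $\pi$ choose the feasible withdrawal vector $\mathbf y(n)$, let $\mathbf I(f,t)$ be a balancing interchange with respect to $\mathbf y(n)$, and let $\pi^*$ choose $\mathbf y^*(n)=\mathbf y(n)+\mathbf I(f,t)$ at slot $n$. Order the updated lengths $\hat x_0(n),\dots,\hat x_L(n)$ under $\pi$ in non-increasing order with queue $0$ placed last; let $l$ be the position of queue $f$ and $s$ the position of queue $t$ in this order, ties being resolved so that every entry after position $l$ is strictly smaller than the entry at position $l$ and every entry before position $s$ is strictly larger than the entry at position $s$ (so $s>l$). Then $$\kappa_n(\pi^* )=\kappa_n(\pi)-2(s-l)\cdot\mathbb 1_{\{\hat x_{[l]}(n)\ge\hat x_{[s]}(n)+2\}},$$ where $\hat x_{[l]}(n)=\hat x_f(n)$ and $\hat x_{[s]}(n)=\hat x_t(n)$.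
   Context: Model: slotted time; real queues $1,\dots,L$, dummy queue $0$, $K$ identical servers. State $(\mathbf x(n),\mathbf g(n))$: queue lengths $x_i(n)\in\mathbb Z_+$ ($x_0=0$) and connectivities $g_{i,j}(n)\in\{0,1\}$ ($g_{0,j}=1$). A scheduling control $\mathbf q\in\{0,\dots,L\}^K$ (server $j$ serves queue $q_j$, $0$ = idle) is feasible if $g_{q_j,j}=1$ for all $j$ and each real queue $i$ receives at most $x_i$ servers; its withdrawal vector is $y_i=\#\{j:q_j=i\}$. Feasible withdrawal vectors are those arising from feasible controls. Updated sizes $\hat x_i(n)=x_i(n)-y_i(n)$. Imbalance index of a policy choosing $\mathbf y(n)$: $\kappa_n=\sum_{i=1}^{L}\sum_{j=i+1}^{L+1}(\hat x_{[i]}(n)-\hat x_{[j]}(n))$ where $[1],\dots,[L]$ order the real queues by non-increasing $\hat x$ and $[L+1]=0$. Interchange: for $f,t\in\{0,\dots,L\}$, $f\ne t$, $\mathbf I(f,t)\in\mathbb Z^{L+1}$ has $+1$ in component $f$, $-1$ in component $t$, $0$ elsewhere. It is feasible (w.r.t. $\mathbf y(n)$) if $\mathbf y(n)+\mathbf I(f,t)$ is a feasible withdrawal vector, and balancing if it is feasible and $\hat x_f(n)\ge\hat x_t(n)+1$. *)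

theory Defs
  imports Main
begin

(* Real queues 1..L, dummy queue 0, servers 1..K.
   x i : queue lengths (x 0 = 0), g i j : connectivity of queue i to server j. *)

definition feasible_control ::
  "nat \<Rightarrow> nat \<Rightarrow> (nat \<Rightarrow> nat) \<Rightarrow> (nat \<Rightarrow> nat \<Rightarrow> bool) \<Rightarrow> (nat \<Rightarrow> nat) \<Rightarrow> bool" where
  "feasible_control L K x g q \<longleftrightarrow>
     (\<forall>j\<in>{1..K}. q j \<le> L \<and> g (q j) j) \<and>
     (\<forall>i\<in>{1..L}. card {j\<in>{1..K}. q j = i} \<le> x i)"

definition withdrawal :: "nat \<Rightarrow> (nat \<Rightarrow> nat) \<Rightarrow> nat \<Rightarrow> int" where
  "withdrawal K q i = int (card {j\<in>{1..K}. q j = i})"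

definition feasible_withdrawal ::
  "nat \<Rightarrow> nat \<Rightarrow> (nat \<Rightarrow> nat) \<Rightarrow> (nat \<Rightarrow> nat \<Rightarrow> bool) \<Rightarrow> (nat \<Rightarrow> int) \<Rightarrow> bool" where
  "feasible_withdrawal L K x g y \<longleftrightarrow>
     (\<exists>q. feasible_control L K x g q \<and> (\<forall>i\<le>L. y i = withdrawal K q i))"

definition xhat :: "(nat \<Rightarrow> nat) \<Rightarrow> (nat \<Rightarrow> int) \<Rightarrow> nat \<Rightarrow> int" where
  "xhat x y i = int (x i) - y i"

definition interchange :: "nat \<Rightarrow> nat \<Rightarrow> nat \<Rightarrow> int" where
  "interchange f t i = (if i = f then 1 else if i = t then -1 else 0)"

definition feasible_interchange ::
  "nat \<Rightarrow> nat \<Rightarrow> (nat \<Rightarrow> nat) \<Rightarrow> (nat \<Rightarrow> nat \<Rightarrow> bool) \<Rightarrow> (nat \<Rightarrow> int) \<Rightarrow> nat \<Rightarrow> nat \<Rightarrow> bool" where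
  "feasible_interchange L K x g y f t \<longleftrightarrow>
     f \<le> L \<and> t \<le> L \<and> f \<noteq> t \<and>
     feasible_withdrawal L K x g (\<lambda>i. y i + interchange f t i)"

definition balancing_interchange ::
  "nat \<Rightarrow> nat \<Rightarrow> (nat \<Rightarrow> nat) \<Rightarrow> (nat \<Rightarrow> nat \<Rightarrow> bool) \<Rightarrow> (nat \<Rightarrow> int) \<Rightarrow> nat \<Rightarrow> nat \<Rightarrow> bool" where
  "balancing_interchange L K x g y f t \<longleftrightarrow>
     feasible_interchange L K x g y f t \<and> xhat x y f \<ge> xhat x y t + 1"

(* imbalance index: v lists \<hat>x_[1..L] (real queues, non-increasing) followed by \<hat>x_0;
   0-based positions 0..L correspond to [1]..[L+1]. *)
definition kappa :: "nat \<Rightarrow> (nat \<Rightarrow> int) \<Rightarrow> int" where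
  "kappa L xh = (let v = rev (sort (map xh [1..<L+1])) @ [xh 0] in
     (\<Sum>i<L. \<Sum>j\<in>{i+1..L}. v ! i - v ! j))"

definition queue_order :: "nat \<Rightarrow> (nat \<Rightarrow> int) \<Rightarrow> (nat \<Rightarrow> nat) \<Rightarrow> bool" where
  "queue_order L xh \<sigma> \<longleftrightarrow>
     bij_betw \<sigma> {1..L+1} {0..L} \<and> \<sigma> (L+1) = 0 \<and>
     (\<forall>i j. 1 \<le> i \<and> i < j \<and> j \<le> L+1 \<longrightarrow> xh (\<sigma> j) \<le> xh (\<sigma> i))"

definition tie_positions ::
  "nat \<Rightarrow> (nat \<Rightarrow> int) \<Rightarrow> (nat \<Rightarrow> nat) \<Rightarrow> nat \<Rightarrow> nat \<Rightarrow> nat \<Rightarrow> nat \<Rightarrow> bool" where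
  "tie_positions L xh \<sigma> f t l s \<longleftrightarrow>
     l \<in> {1..L+1} \<and> s \<in> {1..L+1} \<and> \<sigma> l = f \<and> \<sigma> s = t \<and>
     (\<forall>j. l < j \<and> j \<le> L+1 \<longrightarrow> xh (\<sigma> j) < xh (\<sigma> l)) \<and>
     (\<forall>j. 1 \<le> j \<and> j < s \<longrightarrow> xh (\<sigma> s) < xh (\<sigma> j))"

end

theory Submission
  imports Defs "HOL-Library.Multiset" "HOL-Library.Product_Lexorder"
begin

text \<open>Real queues have non-negative updated lengths and the dummy queue a non-positive one,
  so the dummy queue is shortest, the sorted list defining \<open>\<kappa>\<close> is non-increasing, and
  \<open>2\<kappa>\<close> is the sum of \<open>\<bar>x\<^sub>p - x\<^sub>q\<bar>\<close> over all ordered pairs of queues. Moving one unit from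
  \<open>f\<close> to \<open>t\<close> affects only pairs involving \<open>f\<close> or \<open>t\<close>: the pair \<open>{f, t}\<close> loses 2 unless the
  two lengths are adjacent, and \<open>\<bar>x\<^sub>f - x\<^sub>q\<bar> + \<bar>x\<^sub>t - x\<^sub>q\<bar>\<close> loses 2 exactly when \<open>x\<^sub>q\<close> lies
  strictly between \<open>x\<^sub>t\<close> and \<open>x\<^sub>f\<close>. By the tie convention these queues \<open>q\<close> occupy exactly the
  positions strictly between \<open>l\<close> and \<open>s\<close>.\<close>

lemma sum_square_symmetric:
  fixes F :: "nat \<Rightarrow> nat \<Rightarrow> 'a::comm_semiring_1"
  assumes sym: "\<And>i j. F i j = F j i" and diag: "\<And>i. F i i = 0"
  shows "(\<Sum>i<n. \<Sum>j<n. F i j) = 2 * (\<Sum>i<n. \<Sum>j\<in>{i<..<n}. F i j)"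
proof (induction n)
  case 0
  then show ?case by simp
next
  case (Suc n)
  have upper: "(\<Sum>i<Suc n. \<Sum>j\<in>{i<..<Suc n}. F i j)
      = (\<Sum>i<n. F i n) + (\<Sum>i<n. \<Sum>j\<in>{i<..<n}. F i j)"
  proof -
    have "\<And>i. i < n \<Longrightarrow> {i<..<Suc n} = insert n {i<..<n}" and "{n<..<Suc n} = {}"
      by auto
    then have "(\<Sum>i<n. \<Sum>j\<in>{i<..<Suc n}. F i j) = (\<Sum>i<n. F i n + (\<Sum>j\<in>{i<..<n}. F i j))"
      by (intro sum.cong) auto
    then show ?thesis by (simp add: sum.distrib \<open>{n<..<Suc n} = {}\<close>)
  qed
  have "(\<Sum>i<Suc n. \<Sum>j<Suc n. F i j)
      = (\<Sum>i<n. \<Sum>j<n. F i j) + (\<Sum>i<n. F i n) + (\<Sum>j<n. F n j)"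
    by (simp add: sum.distrib diag add_ac)
  also have "(\<Sum>j<n. F n j) = (\<Sum>i<n. F i n)" by (simp add: sym)
  finally show ?case using Suc.IH upper by (simp add: algebra_simps mult_2)
qed

lemma sum_list_pairs_mset_eq:
  assumes "mset xs = mset ys"
  shows "(\<Sum>a\<leftarrow>xs. \<Sum>b\<leftarrow>xs. F a b) = (\<Sum>a\<leftarrow>ys. \<Sum>b\<leftarrow>ys. (F a b :: 'b::comm_monoid_add))"
proof -
  have perm: "sum_list (map k xs) = sum_list (map k ys)" for k :: "'a \<Rightarrow> 'b"
    by (metis assms mset_map sum_mset_sum_list)
  show ?thesis
    unfolding perm[of "\<lambda>a. \<Sum>b\<leftarrow>xs. F a b"] by (simp only: perm)
qed

lemma kappa_eq_half_sum_abs_pairs: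
  fixes h :: "nat \<Rightarrow> int"
  assumes "\<forall>i\<in>{1..L}. h 0 \<le> h i"
  shows "2 * kappa L h = (\<Sum>p\<le>L. \<Sum>q\<le>L. \<bar>h p - h q\<bar>)"
proof -
  define v where "v = rev (sort (map h [1..<L+1])) @ [h 0]"
  have len: "length v = L + 1" by (simp add: v_def)
  have sorted: "sorted_wrt (\<ge>) v"
    using assms by (auto simp: v_def sorted_wrt_append sorted_wrt_rev)
  have "{..L} = set [0..<L+1]" by auto
  then have "(\<Sum>p\<le>L. \<Sum>q\<le>L. \<bar>h p - h q\<bar>) = (\<Sum>a\<leftarrow>map h [0..<L+1]. \<Sum>b\<leftarrow>map h [0..<L+1]. \<bar>a - b\<bar>)"
    by (simp only: sum_set_upt_conv_sum_list_nat map_map comp_def)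
  also have "\<dots> = (\<Sum>a\<leftarrow>v. \<Sum>b\<leftarrow>v. \<bar>a - b\<bar>)"
    by (rule sum_list_pairs_mset_eq) (simp add: v_def upt_conv_Cons del: upt_Suc)
  also have "\<dots> = (\<Sum>i<L+1. \<Sum>j<L+1. \<bar>v ! i - v ! j\<bar>)"
    by (simp add: sum_list_sum_nth atLeast0LessThan len)
  also have "\<dots> = 2 * (\<Sum>i<L+1. \<Sum>j\<in>{i<..<L+1}. \<bar>v ! i - v ! j\<bar>)"
    by (rule sum_square_symmetric) (simp_all add: abs_minus_commute)
  also have "(\<Sum>i<L+1. \<Sum>j\<in>{i<..<L+1}. \<bar>v ! i - v ! j\<bar>) = (\<Sum>i<L. \<Sum>j\<in>{i+1..L}. v ! i - v ! j)"
  proof -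
    have "{i<..<L+1} = {i+1..L}" for i by auto
    moreover have "\<bar>v ! i - v ! j\<bar> = v ! i - v ! j" if "i < j" "j \<le> L" for i j
      using sorted len that by (auto simp: sorted_wrt_iff_nth_less)
    ultimately show ?thesis by (simp add: lessThan_Suc)
  qed
  finally show ?thesis by (simp add: kappa_def v_def Let_def)
qed

lemma sum_abs_pairs_interchange:
  fixes h :: "nat \<Rightarrow> int"
  assumes "finite S" "f \<in> S" "t \<in> S" "f \<noteq> t" "h t < h f"
  defines "h' \<equiv> \<lambda>i. h i - interchange f t i"
  shows "(\<Sum>p\<in>S. \<Sum>q\<in>S. \<bar>h' p - h' q\<bar>)
    = (\<Sum>p\<in>S. \<Sum>q\<in>S. \<bar>h p - h q\<bar>) - 4 * int (card {r\<in>S. h t < h r \<and> h r < h f})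
      - 4 * of_bool (h t + 2 \<le> h f)"
proof -
  define R where "R = S - {f, t}"
  have S: "S = insert f (insert t R)" and R: "finite R" "f \<notin> R" "t \<notin> R"
    using assms(1-3) by (auto simp: R_def)
  have split: "(\<Sum>p\<in>S. \<Sum>q\<in>S. \<bar>k p - k q\<bar>) = (\<Sum>p\<in>R. \<Sum>q\<in>R. \<bar>k p - k q\<bar>)
      + 2 * (\<Sum>q\<in>R. \<bar>k f - k q\<bar> + \<bar>k t - k q\<bar>) + 2 * \<bar>k f - k t\<bar>" for k :: "nat \<Rightarrow> int"
    unfolding S using R \<open>f \<noteq> t\<close> by (simp add: sum.distrib abs_minus_commute algebra_simps)
  have on_R: "h' q = h q" if "q \<in> R" for q
    using that R by (auto simp: h'_def interchange_def)
  have h'_f: "h' f = h f - 1" and h'_t: "h' t = h t + 1"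
    using \<open>f \<noteq> t\<close> by (simp_all add: h'_def interchange_def)
  have "(\<Sum>q\<in>R. \<bar>h' f - h' q\<bar> + \<bar>h' t - h' q\<bar>)
      = (\<Sum>q\<in>R. \<bar>h f - h q\<bar> + \<bar>h t - h q\<bar> - 2 * of_bool (h t < h q \<and> h q < h f))"
    using \<open>h t < h f\<close> by (intro sum.cong) (auto simp: on_R h'_f h'_t split: abs_split)
  also have "\<dots> = (\<Sum>q\<in>R. \<bar>h f - h q\<bar> + \<bar>h t - h q\<bar>)
      - 2 * int (card {r\<in>S. h t < h r \<and> h r < h f})"
  proof -
    have "{r\<in>S. h t < h r \<and> h r < h f} = R \<inter> {r. h t < h r \<and> h r < h f}"
      by (auto simp: S)
    then show ?thesis using R by (simp add: sum_subtractf sum_distrib_left[symmetric])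
  qed
  finally show ?thesis
    unfolding split using on_R h'_f h'_t \<open>h t < h f\<close> by simp
qed

lemma sort_key_positions:
  fixes key :: "nat \<Rightarrow> 'k::linorder"
  assumes zero_last: "\<forall>r\<in>{1..L}. key r < key 0"
  defines "\<sigma> \<equiv> \<lambda>j. sort_key key [0..<L+1] ! (j - 1)"
  shows "bij_betw \<sigma> {1..L+1} {0..L}" and "\<sigma> (L+1) = 0"
    and "\<And>i j. 1 \<le> i \<Longrightarrow> i < j \<Longrightarrow> j \<le> L+1 \<Longrightarrow> key (\<sigma> i) \<le> key (\<sigma> j) \<and> \<sigma> i \<noteq> \<sigma> j"
proof -
  define ws where "ws = sort_key key [0..<L+1]"
  have len: "length ws = L+1" and set: "set ws = {0..L}" and dist: "distinct ws"
    by (auto simp: ws_def)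
  have ordered: "key (ws ! i) \<le> key (ws ! j) \<and> ws ! i \<noteq> ws ! j" if "i < j" "j \<le> L" for i j
  proof
    have "sorted (map key ws)" by (simp add: ws_def)
    then have "map key ws ! i \<le> map key ws ! j"
      using that len by (intro sorted_nth_mono) auto
    then show "key (ws ! i) \<le> key (ws ! j)"
      using that len by simp
    show "ws ! i \<noteq> ws ! j"
      using that len dist by (simp add: nth_eq_iff_index_eq)
  qed
  have shift: "bij_betw (\<lambda>j. j - 1) {1..L+1} {..<L+1}"
    by (rule bij_betw_byWitness[where f' = Suc]) auto
  moreover have "bij_betw ((!) ws) {..<L+1} {0..L}"
    using len set by (intro bij_betw_nth[OF dist]) auto
  ultimately have "bij_betw ((!) ws \<circ> (\<lambda>j. j - 1)) {1..L+1} {0..L}"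
    by (rule bij_betw_trans)
  then show "bij_betw \<sigma> {1..L+1} {0..L}"
    by (simp add: \<sigma>_def ws_def comp_def)
  show "\<sigma> (L+1) = 0"
  proof -
    obtain i where i: "i \<le> L" "ws ! i = 0"
    proof -
      have "0 \<in> set ws" using set by simp
      then show ?thesis using that len by (auto simp: in_set_conv_nth less_Suc_eq_le)
    qed
    have "i = L"
    proof (rule ccontr)
      assume "i \<noteq> L"
      then have "key 0 \<le> key (ws ! L)" and "ws ! L \<noteq> 0" using ordered[of i L] i by auto
      moreover have "ws ! L \<in> {0..L}" using set len by (auto intro: nth_mem)
      ultimately have "ws ! L \<in> {1..L}" by auto
      then show False using zero_last \<open>key 0 \<le> key (ws ! L)\<close> by (auto simp: not_le[symmetric])
    qed
    then show ?thesis using i by (simp add: \<sigma>_def ws_def)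
  qed
  show "key (\<sigma> i) \<le> key (\<sigma> j) \<and> \<sigma> i \<noteq> \<sigma> j" if "1 \<le> i" "i < j" "j \<le> L+1" for i j
    using ordered[of "i - 1" "j - 1"] that by (simp add: \<sigma>_def ws_def)
qed

lemma ex_queue_order_tie_positions:
  fixes h :: "nat \<Rightarrow> int"
  assumes fL: "f \<le> L" and tL: "t \<le> L" and "f \<noteq> t" and "f \<noteq> 0" and "h t < h f"
    and zero_min: "\<forall>i\<in>{1..L}. h 0 \<le> h i"
    and zero_strict_min: "t = 0 \<Longrightarrow> \<forall>i\<in>{1..L}. h 0 < h i"
  shows "\<exists>\<sigma> l s. queue_order L h \<sigma> \<and> tie_positions L h \<sigma> f t l s"
proof -
  \<comment> \<open>Sort by decreasing length; among equal lengths \<open>t\<close> goes first, \<open>f\<close> last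
    among the real queues, and the dummy queue after all of them.\<close>
  define rank :: "nat \<Rightarrow> nat" where
    "rank r = (if r = t then 0 else if r = f then 2 else if r = 0 then 3 else 1)" for r
  define key where "key r = (- h r, rank r)" for r
  define \<sigma> where "\<sigma> = (\<lambda>j. sort_key key [0..<L+1] ! (j - 1))"
  have zero_le: "h 0 \<le> h r" if "r \<le> L" for r
    using that zero_min by (cases "r = 0") auto
  have zero_last: "\<forall>r\<in>{1..L}. key r < key 0"
    using zero_min zero_strict_min \<open>f \<noteq> 0\<close> by (cases "t = 0") (auto simp: key_def rank_def)
  have pos: "bij_betw \<sigma> {1..L+1} {0..L}" "\<sigma> (L+1) = 0"
      "\<And>i j. 1 \<le> i \<Longrightarrow> i < j \<Longrightarrow> j \<le> L+1 \<Longrightarrow> key (\<sigma> i) \<le> key (\<sigma> j) \<and> \<sigma> i \<noteq> \<sigma> j"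
    using sort_key_positions[OF zero_last] unfolding \<sigma>_def by blast+
  have f_last: "h r < h f" if "r \<le> L" "r \<noteq> f" "key f \<le> key r" for r
    using that zero_le[OF tL] \<open>h t < h f\<close> \<open>f \<noteq> t\<close> by (auto simp: key_def rank_def split: if_splits)
  have t_first: "h t < h r" if "r \<noteq> t" "key r \<le> key t" for r
    using that by (auto simp: key_def rank_def split: if_splits)
  have mono: "h (\<sigma> j) \<le> h (\<sigma> i)" if "1 \<le> i" "i < j" "j \<le> L+1" for i j
    using pos(3)[OF that] by (auto simp: key_def)
  have in_range: "\<sigma> j \<le> L" if "j \<in> {1..L+1}" for j
    using bij_betw_apply[OF pos(1) that] by simp
  obtain l where l: "l \<in> {1..L+1}" "\<sigma> l = f"
    using bij_betw_imp_surj_on[OF pos(1)] fL by (metis atLeastAtMost_iff imageE le0)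
  obtain s where s: "s \<in> {1..L+1}" "\<sigma> s = t"
    using bij_betw_imp_surj_on[OF pos(1)] tL by (metis atLeastAtMost_iff imageE le0)
  have "queue_order L h \<sigma>"
    unfolding queue_order_def using pos(1,2) mono by blast
  moreover have "tie_positions L h \<sigma> f t l s"
    unfolding tie_positions_def
  proof (intro conjI allI impI)
    show "h (\<sigma> j) < h (\<sigma> l)" if "l < j \<and> j \<le> L+1" for j
      using that l pos(3)[of l j] in_range[of j] f_last[of "\<sigma> j"] by auto
    show "h (\<sigma> s) < h (\<sigma> j)" if "1 \<le> j \<and> j < s" for j
      using that s pos(3)[of j s] t_first[of "\<sigma> j"] by auto
  qed (use l s in auto)
  ultimately show ?thesis by blast
qed

lemma tie_positions_between:
  fixes h :: "nat \<Rightarrow> int"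
  assumes "queue_order L h \<sigma>" and "tie_positions L h \<sigma> f t l s" and "h t < h f"
  shows "l < s" and "{r\<in>{..L}. h t < h r \<and> h r < h f} = \<sigma> ` {l<..<s}"
    and "card {r\<in>{..L}. h t < h r \<and> h r < h f} = s - l - 1"
proof -
  have bij: "bij_betw \<sigma> {1..L+1} {0..L}"
    and mono: "\<And>i j. 1 \<le> i \<Longrightarrow> i < j \<Longrightarrow> j \<le> L+1 \<Longrightarrow> h (\<sigma> j) \<le> h (\<sigma> i)"
    using assms(1) by (auto simp: queue_order_def)
  have l: "l \<in> {1..L+1}" "\<sigma> l = f" and s: "s \<in> {1..L+1}" "\<sigma> s = t"
    and after_l: "\<And>j. l < j \<Longrightarrow> j \<le> L+1 \<Longrightarrow> h (\<sigma> j) < h f"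
    and before_s: "\<And>j. 1 \<le> j \<Longrightarrow> j < s \<Longrightarrow> h t < h (\<sigma> j)"
    using assms(2) by (auto simp: tie_positions_def)
  have ge_f: "h f \<le> h (\<sigma> j)" if "1 \<le> j" "j \<le> l" for j
    using that l mono[of j l] by (cases "j = l") auto
  have le_t: "h (\<sigma> j) \<le> h t" if "s \<le> j" "j \<le> L+1" for j
    using that s mono[of s j] by (cases "j = s") auto
  show "l < s"
    using ge_f[of s] s \<open>h t < h f\<close> by (cases "l < s") auto
  show "{r\<in>{..L}. h t < h r \<and> h r < h f} = \<sigma> ` {l<..<s}"
  proof (intro equalityI subsetI)
    fix r assume r: "r \<in> {r\<in>{..L}. h t < h r \<and> h r < h f}"
    then obtain j where j: "j \<in> {1..L+1}" "r = \<sigma> j"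
      using bij_betw_imp_surj_on[OF bij] by (metis (no_types, lifting) atLeast0AtMost imageE mem_Collect_eq)
    have "l < j" using ge_f[of j] j r by (cases "l < j") auto
    moreover have "j < s" using le_t[of j] j r by (cases "j < s") auto
    ultimately show "r \<in> \<sigma> ` {l<..<s}" using j by auto
  next
    fix r assume "r \<in> \<sigma> ` {l<..<s}"
    then obtain j where j: "l < j" "j < s" "r = \<sigma> j" by auto
    then have "j \<in> {1..L+1}" using l s by auto
    then show "r \<in> {r\<in>{..L}. h t < h r \<and> h r < h f}"
      using bij_betw_apply[OF bij] j after_l[of j] before_s[of j] by auto
  qed
  moreover have "inj_on \<sigma> {l<..<s}"
    by (rule inj_on_subset[OF bij_betw_imp_inj_on[OF bij]]) (use l s in auto)
  ultimately show "card {r\<in>{..L}. h t < h r \<and> h r < h f} = s - l - 1"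
    by (simp add: card_image)
qed

lemma kappa_interchange:
  fixes h :: "nat \<Rightarrow> int"
  assumes "f \<le> L" "t \<le> L" "f \<noteq> t" "h t < h f"
  defines "h' \<equiv> \<lambda>i. h i - interchange f t i"
  assumes "\<forall>i\<in>{1..L}. h 0 \<le> h i" and "\<forall>i\<in>{1..L}. h' 0 \<le> h' i"
  shows "kappa L h' = kappa L h - 2 * int (card {r\<in>{..L}. h t < h r \<and> h r < h f})
    - 2 * of_bool (h t + 2 \<le> h f)"
proof -
  have "2 * kappa L h' = (\<Sum>p\<le>L. \<Sum>q\<le>L. \<bar>h' p - h' q\<bar>)"
    by (rule kappa_eq_half_sum_abs_pairs[OF assms(7)])
  also have "\<dots> = (\<Sum>p\<le>L. \<Sum>q\<le>L. \<bar>h p - h q\<bar>)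
      - 4 * int (card {r\<in>{..L}. h t < h r \<and> h r < h f}) - 4 * of_bool (h t + 2 \<le> h f)"
    unfolding h'_def using assms(1-4) by (intro sum_abs_pairs_interchange) auto
  also have "(\<Sum>p\<le>L. \<Sum>q\<le>L. \<bar>h p - h q\<bar>) = 2 * kappa L h"
    by (rule kappa_eq_half_sum_abs_pairs[OF assms(6), symmetric])
  finally show ?thesis by simp
qed

lemma kappa_interchange_tie_positions:
  fixes h :: "nat \<Rightarrow> int"
  assumes order: "queue_order L h \<sigma>" "tie_positions L h \<sigma> f t l s"
    and "f \<le> L" "t \<le> L" "f \<noteq> t" "h t < h f"
  defines "h' \<equiv> \<lambda>i. h i - interchange f t i"
  assumes "\<forall>i\<in>{1..L}. h 0 \<le> h i" and "\<forall>i\<in>{1..L}. h' 0 \<le> h' i"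
  shows "l < s" and "kappa L h' = kappa L h - 2 * (int s - int l) * of_bool (h t + 2 \<le> h f)"
proof -
  define B where "B = {r\<in>{..L}. h t < h r \<and> h r < h f}"
  have "l < s" and card_B: "card B = s - l - 1"
    using tie_positions_between[OF order \<open>h t < h f\<close>] by (simp_all add: B_def)
  then show "l < s" by simp
  have "B = {}" if "\<not> h t + 2 \<le> h f"
    using that by (auto simp: B_def)
  moreover have "kappa L h' = kappa L h - 2 * int (card B) - 2 * of_bool (h t + 2 \<le> h f)"
    using kappa_interchange[OF assms(3-6)] assms(8,9) by (simp add: B_def h'_def)
  ultimately show "kappa L h' = kappa L h - 2 * (int s - int l) * of_bool (h t + 2 \<le> h f)"
    using \<open>l < s\<close> card_B by (cases "h t + 2 \<le> h f") (auto simp: of_nat_diff)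
qed

lemma xhat_add_interchange:
  "xhat x (\<lambda>i. y i + interchange f t i) = (\<lambda>i. xhat x y i - interchange f t i)"
  by (simp add: xhat_def fun_eq_iff)

lemma feasible_withdrawal_xhat_bounds:
  assumes "feasible_withdrawal L K x g y" and "x 0 = 0"
  shows "\<forall>i\<in>{1..L}. 0 \<le> xhat x y i" and "xhat x y 0 \<le> 0"
proof -
  obtain q where q: "feasible_control L K x g q" and y: "\<forall>i\<le>L. y i = withdrawal K q i"
    using assms(1) by (auto simp: feasible_withdrawal_def)
  show "\<forall>i\<in>{1..L}. 0 \<le> xhat x y i"
    using q y by (auto simp: feasible_control_def xhat_def withdrawal_def)
  show "xhat x y 0 \<le> 0"
    using y assms(2) by (simp add: xhat_def withdrawal_def)
qed

lemma balancing_interchange_dummy_queue: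
  assumes "x 0 = 0" and fw: "feasible_withdrawal L K x g y"
    and bal: "balancing_interchange L K x g y f t"
  shows "f \<noteq> 0" and "t = 0 \<Longrightarrow> xhat x y 0 < 0"
proof -
  have "t \<le> L" "f \<noteq> t" "xhat x y t < xhat x y f"
    and fw': "feasible_withdrawal L K x g (\<lambda>i. y i + interchange f t i)"
    using bal by (auto simp: balancing_interchange_def feasible_interchange_def)
  show "f \<noteq> 0"
  proof
    assume "f = 0"
    then have "t \<in> {1..L}" using \<open>t \<le> L\<close> \<open>f \<noteq> t\<close> by auto
    then show False
      using feasible_withdrawal_xhat_bounds[OF fw \<open>x 0 = 0\<close>] \<open>f = 0\<close>
        \<open>xhat x y t < xhat x y f\<close> by force
  qed
  show "xhat x y 0 < 0" if "t = 0"
    using feasible_withdrawal_xhat_bounds(2)[OF fw' \<open>x 0 = 0\<close>] \<open>f \<noteq> 0\<close> that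
    unfolding xhat_add_interchange by (simp add: interchange_def)
qed

theorem lemma2:
  fixes L K :: nat and x :: "nat \<Rightarrow> nat" and g :: "nat \<Rightarrow> nat \<Rightarrow> bool"
    and y :: "nat \<Rightarrow> int" and f t :: nat
  assumes "x 0 = 0"
    and "\<forall>j\<in>{1..K}. g 0 j"
    and "feasible_withdrawal L K x g y"
    and "balancing_interchange L K x g y f t"
  shows "(\<exists>\<sigma> l s. queue_order L (xhat x y) \<sigma> \<and> tie_positions L (xhat x y) \<sigma> f t l s)
    \<and> (\<forall>\<sigma> l s. queue_order L (xhat x y) \<sigma> \<and> tie_positions L (xhat x y) \<sigma> f t l s \<longrightarrow>
          l < s \<and>
          kappa L (xhat x (\<lambda>i. y i + interchange f t i)) =
            kappa L (xhat x y)
            - 2 * (int s - int l) * of_bool (xhat x y f \<ge> xhat x y t + 2))"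
proof -
  \<comment> \<open>The connectivity of the dummy queue is not needed: feasibility of the interchanged
    withdrawal vector is part of the hypothesis.\<close>
  define h where "h = xhat x y"
  have fL: "f \<le> L" and tL: "t \<le> L" and "f \<noteq> t" and "h t < h f"
    and fw': "feasible_withdrawal L K x g (\<lambda>i. y i + interchange f t i)"
    using assms(4) by (auto simp: balancing_interchange_def feasible_interchange_def h_def)
  note bounds = feasible_withdrawal_xhat_bounds[OF assms(3,1), folded h_def]
  note bounds' = feasible_withdrawal_xhat_bounds[OF fw' assms(1), unfolded xhat_add_interchange,
      folded h_def]
  have zero_min: "\<forall>i\<in>{1..L}. h 0 \<le> h i"
    and zero_min': "\<forall>i\<in>{1..L}. h 0 - interchange f t 0 \<le> h i - interchange f t i"
    using bounds bounds' by force+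
  note dummy = balancing_interchange_dummy_queue[OF assms(1,3,4), folded h_def]
  have "\<exists>\<sigma> l s. queue_order L h \<sigma> \<and> tie_positions L h \<sigma> f t l s"
    using dummy bounds by (intro ex_queue_order_tie_positions[OF fL tL \<open>f \<noteq> t\<close> _ \<open>h t < h f\<close>
        zero_min]) force+
  moreover have "l < s \<and> kappa L (\<lambda>i. h i - interchange f t i)
      = kappa L h - 2 * (int s - int l) * of_bool (h f \<ge> h t + 2)"
    if "queue_order L h \<sigma>" "tie_positions L h \<sigma> f t l s" for \<sigma> l s
    using kappa_interchange_tie_positions[OF that fL tL \<open>f \<noteq> t\<close> \<open>h t < h f\<close> zero_min zero_min']
    by blast
  ultimately show ?thesis
    unfolding h_def xhat_add_interchange by blast
qed

end
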